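(* Let $\mathbf d=(d_1,\ldots,d_n)$ be a degree sequence, $n\ge 3$, and define $g_n:[n]\to[0,\infty)$ by \[g_n(k)=\frac{k!}{\langle n\rangle_k}\sum_{1\le i_1<\cdots<i_k\le n}\ \prod_{j=1}^k d_{i_j}.\] Then for every $v\in[n]$ and $2\le k\le n-1$, \[\mathbb P(\mathfrak s_n(v)>k)=g_n(k)-\frac{k\,d_v}{n-k+1}\,\mathbb P(\mathfrak s_n(v)>k-1).\]
   Context: A degree sequence is $\mathbf d=(d_1,\ldots,d_n)\in\mathbb N_0^n$ with $\sum_j d_j=n$. Let $\mathfrak F(\mathbf d)=\{f:[n]\to[n]: |f^{-1}(\{i\})|=d_i\ \forall i\}$ and let $F$ be uniform on $\mathfrak F(\mathbf d)$. For $f:V\to V$, $v\in V$, the six-length is $\mathfrak s_f(v)=\min\{k\in\mathbb N: f^{(k)}(v)\in\{f^{(j)}(v):0\le j\le k-1\}\}$ ($f^{(k)}$ the $k$-fold composition, $f^{(0)}=\mathrm{id}$); $\mathfrak s_n(v)=\mathfrak s_F(v)$. $\langle n\rangle_k=n!/(n-k)!$. *)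

theory Defs
  imports Complex_Main "HOL-Library.FuncSet"
begin

definition fibre_funs :: "nat \<Rightarrow> (nat \<Rightarrow> nat) \<Rightarrow> (nat \<Rightarrow> nat) set" where
  "fibre_funs n d = {f \<in> {1..n} \<rightarrow>\<^sub>E {1..n}. \<forall>i\<in>{1..n}. card {x \<in> {1..n}. f x = i} = d i}"

definition six_length :: "(nat \<Rightarrow> nat) \<Rightarrow> nat \<Rightarrow> nat" where
  "six_length f v = (LEAST k. (f ^^ k) v \<in> (\<lambda>j. (f ^^ j) v) ` {..<k})"

text \<open>P(s_n(v) > k) for F uniform on fibre_funs n d.\<close>
definition prob_sl_gt :: "nat \<Rightarrow> (nat \<Rightarrow> nat) \<Rightarrow> nat \<Rightarrow> nat \<Rightarrow> real" where
  "prob_sl_gt n d v k =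
     real (card {f \<in> fibre_funs n d. six_length f v > k}) / real (card (fibre_funs n d))"

definition falling :: "nat \<Rightarrow> nat \<Rightarrow> real" where
  "falling n k = fact n / fact (n - k)"

definition g_fun :: "nat \<Rightarrow> (nat \<Rightarrow> nat) \<Rightarrow> nat \<Rightarrow> real" where
  "g_fun n d k = fact k / falling n k *
     (\<Sum>S\<in>{S. S \<subseteq> {1..n} \<and> card S = k}. \<Prod>i\<in>S. real (d i))"

end

theory Submission
  imports Defs "HOL-Combinatorics.Multiset_Permutations"
begin

text \<open>
  The six-length of \<open>v\<close> exceeds \<open>k\<close> iff \<open>v, F v, \<dots>, F\<^sup>k v\<close> are distinct, i.e. iff \<open>F\<close> follows
  the path \<open>v, y\<^sub>1, \<dots>, y\<^sub>k\<close> for exactly one arrangement \<open>y\<^sub>1, \<dots>, y\<^sub>k\<close> of distinct points of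
  \<open>[n] - {v}\<close>. Composing \<open>F\<close> with a transposition of two points off the path so far preserves
  the uniform law, so the path continues to a fresh point \<open>y\<close> with conditional probability
  \<open>d y / (n - i)\<close>. Summing over arrangements,
  \<open>P(s\<^sub>n(v) > k) = k! e\<^sub>k / \<langle>n\<rangle>\<^sub>k\<close> with \<open>e\<^sub>k\<close> the \<open>k\<close>-th elementary symmetric function of
  the degrees on \<open>[n] - {v}\<close>, whereas splitting off \<open>v\<close> gives
  \<open>g\<^sub>n(k) = k! (e\<^sub>k + d v \<cdot> e\<^sub>k\<^sub>-\<^sub>1) / \<langle>n\<rangle>\<^sub>k\<close>; the recursion is the difference of the two.
\<close>

definition elem_sym :: "'a set \<Rightarrow> ('a \<Rightarrow> 'b::comm_semiring_1) \<Rightarrow> nat \<Rightarrow> 'b" where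
  "elem_sym A w k = (\<Sum>S | S \<subseteq> A \<and> card S = k. \<Prod>i\<in>S. w i)"

definition arrangements :: "'a set \<Rightarrow> nat \<Rightarrow> 'a list set" where
  "arrangements A k = {ys. distinct ys \<and> length ys = k \<and> set ys \<subseteq> A}"

lemma elem_sym_insert:
  assumes B: "finite B" and v: "v \<notin> B"
  shows "elem_sym (insert v B) w (Suc k) = elem_sym B w (Suc k) + w v * elem_sym B w k"
proof -
  let ?T = "\<lambda>A m. {S. S \<subseteq> A \<and> card S = m}"
  have fin: "finite (?T B m)" for m
    by (rule finite_subset[of _ "Pow B"]) (use B in auto)
  have split: "?T (insert v B) (Suc k) = ?T B (Suc k) \<union> insert v ` ?T B k"
  proof (intro equalityI subsetI)
    fix S assume S: "S \<in> ?T (insert v B) (Suc k)"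
    then have "finite S" using B by (auto intro: finite_subset)
    then show "S \<in> ?T B (Suc k) \<union> insert v ` ?T B k"
      using S by (cases "v \<in> S") (auto intro!: image_eqI[of _ _ "S - {v}"])
  next
    fix S assume "S \<in> ?T B (Suc k) \<union> insert v ` ?T B k"
    then show "S \<in> ?T (insert v B) (Suc k)"
    proof
      assume "S \<in> insert v ` ?T B k"
      then obtain U where "U \<subseteq> B" "card U = k" "S = insert v U" by auto
      moreover from this have "finite U" "v \<notin> U" using B v by (auto intro: finite_subset)
      ultimately show ?thesis by auto
    qed auto
  qed
  have inj: "inj_on (insert v) (?T B k)"
    using v by (intro inj_onI) (metis Diff_insert_absorb subset_iff mem_Collect_eq)
  have "(\<Sum>S\<in>insert v ` ?T B k. \<Prod>i\<in>S. w i) = (\<Sum>S\<in>?T B k. w v * (\<Prod>i\<in>S. w i))"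
    using B v by (simp add: sum.reindex[OF inj]) (intro sum.cong refl prod.insert; auto dest: finite_subset)
  moreover have "?T B (Suc k) \<inter> insert v ` ?T B k = {}"
    using v by auto
  ultimately show ?thesis
    unfolding elem_sym_def split using fin by (simp add: sum.union_disjoint sum_distrib_left)
qed

lemma finite_arrangements: "finite A \<Longrightarrow> finite (arrangements A k)"
  by (rule finite_subset[of _ "{xs. set xs \<subseteq> A \<and> length xs = k}"])
     (auto simp: arrangements_def intro: finite_lists_length_eq)

lemma sum_arrangements_prod:
  fixes w :: "'a \<Rightarrow> 'b::comm_semiring_1"
  assumes A: "finite A"
  shows "(\<Sum>ys\<in>arrangements A k. \<Prod>i<k. w (ys ! i)) = of_nat (fact k) * elem_sym A w k"
proof -
  let ?T = "{S. S \<subseteq> A \<and> card S = k}"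
  have fin: "finite ?T"
    by (rule finite_subset[of _ "Pow A"]) (use A in auto)
  have prod_set: "(\<Prod>i<k. w (ys ! i)) = (\<Prod>i\<in>set ys. w i)" if "ys \<in> arrangements A k" for ys
  proof -
    have "set ys = (!) ys ` {..<k}" "inj_on ((!) ys) {..<k}"
      using that by (auto simp: arrangements_def set_conv_nth intro: inj_on_nth)
    then show ?thesis by (simp add: prod.reindex)
  qed
  have fibre: "{ys \<in> arrangements A k. set ys = S} = permutations_of_set S" if "S \<in> ?T" for S
    using that by (auto simp: arrangements_def permutations_of_set_def distinct_card)
  have "(\<Sum>ys\<in>arrangements A k. \<Prod>i<k. w (ys ! i)) = (\<Sum>ys\<in>arrangements A k. \<Prod>i\<in>set ys. w i)"
    by (rule sum.cong[OF refl prod_set])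
  also have "\<dots> = (\<Sum>S\<in>?T. \<Sum>ys | ys \<in> arrangements A k \<and> set ys = S. \<Prod>i\<in>set ys. w i)"
    by (rule sum.group[symmetric, OF finite_arrangements[OF A] fin])
       (auto simp: arrangements_def distinct_card)
  also have "\<dots> = (\<Sum>S\<in>?T. of_nat (fact k) * (\<Prod>i\<in>S. w i))"
  proof (intro sum.cong refl)
    fix S assume S: "S \<in> ?T"
    have "(\<Sum>ys | ys \<in> arrangements A k \<and> set ys = S. \<Prod>i\<in>set ys. w i)
        = (\<Sum>ys\<in>permutations_of_set S. \<Prod>i\<in>S. w i)"
      using fibre[OF S] by (intro sum.cong) (auto simp: permutations_of_set_def)
    also have "\<dots> = of_nat (fact k) * (\<Prod>i\<in>S. w i)"
      using S finite_subset[of S A] A by simp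
    finally show "(\<Sum>ys | ys \<in> arrangements A k \<and> set ys = S. \<Prod>i\<in>set ys. w i) = of_nat (fact k) * (\<Prod>i\<in>S. w i)" .
  qed
  finally show ?thesis by (simp add: elem_sym_def sum_distrib_left)
qed

lemma finite_fibre_funs: "finite (fibre_funs n d)"
  by (rule finite_subset[of _ "{1..n} \<rightarrow>\<^sub>E {1..n}"]) (auto simp: fibre_funs_def intro!: finite_PiE)

lemma fibre_funs_nonempty:
  assumes "(\<Sum>i\<in>{1..n}. d i) = n"
  shows "fibre_funs n d \<noteq> {}"
proof -
  define Sg where "Sg = (SIGMA i:{1..n}. {..<d i})"
  have "card Sg = n"
    using assms by (simp add: Sg_def card_SigmaI)
  then obtain h where h: "bij_betw h {1..n} Sg"
    using finite_same_card_bij[of "{1..n}" Sg] by (auto simp: Sg_def)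
  \<comment> \<open>label the points by the pairs \<open>(i, j)\<close> with \<open>j < d i\<close> and send \<open>(i, j)\<close> to \<open>i\<close>\<close>
  define f where "f = (\<lambda>x. if x \<in> {1..n} then fst (h x) else undefined)"
  have "f \<in> {1..n} \<rightarrow>\<^sub>E {1..n}"
    using bij_betwE[OF h] by (auto simp: f_def Sg_def)
  moreover have "card {x \<in> {1..n}. f x = i} = d i" if "i \<in> {1..n}" for i
  proof -
    have "h ` {x \<in> {1..n}. f x = i} = {p \<in> Sg. fst p = i}"
      using bij_betw_imp_surj_on[OF h] by (auto simp: f_def)
    also have "\<dots> = {i} \<times> {..<d i}"
      using that by (auto simp: Sg_def)
    finally have "card (h ` {x \<in> {1..n}. f x = i}) = d i"
      by (simp add: card_cartesian_product)
    moreover have "inj_on h {x \<in> {1..n}. f x = i}"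
      using bij_betw_imp_inj_on[OF h] by (rule inj_on_subset) auto
    ultimately show ?thesis
      by (simp add: card_image)
  qed
  ultimately show ?thesis by (auto simp: fibre_funs_def)
qed

lemma comp_transpose_in_fibre_funs:
  assumes f: "f \<in> fibre_funs n d" and "a \<in> {1..n}" "b \<in> {1..n}"
  shows "f \<circ> Transposition.transpose a b \<in> fibre_funs n d"
proof -
  let ?\<tau> = "Transposition.transpose a b"
  have in_range: "?\<tau> x \<in> {1..n} \<longleftrightarrow> x \<in> {1..n}" for x
    using in_transpose_image_iff[of x a b "{1..n}"] assms(2,3) by simp
  have "{x \<in> {1..n}. (f \<circ> ?\<tau>) x = i} = ?\<tau> ` {x \<in> {1..n}. f x = i}" for i
    unfolding set_eq_iff in_transpose_image_iff using in_range by auto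
  then have "card {x \<in> {1..n}. (f \<circ> ?\<tau>) x = i} = card {x \<in> {1..n}. f x = i}" for i
    by (simp add: card_image)
  moreover have "f \<circ> ?\<tau> \<in> {1..n} \<rightarrow>\<^sub>E {1..n}"
    using f in_range by (auto simp: fibre_funs_def PiE_def Pi_def extensional_def)
  ultimately show ?thesis
    using f by (simp add: fibre_funs_def)
qed

lemma funpow_in_fibre_funs:
  assumes "f \<in> fibre_funs n d" and "v \<in> {1..n}"
  shows "(f ^^ j) v \<in> {1..n}"
proof (induction j)
  case (Suc j)
  then show ?case
    using assms(1) by (auto simp: fibre_funs_def PiE_def Pi_def)
qed (use assms(2) in simp)

text \<open>
  Transpositions of points outside \<open>X\<close> permute \<open>C\<close>, so all these points take the value \<open>y\<close>
  equally often; summing over them counts, for each \<open>f \<in> C\<close>, its \<open>d y\<close> preimages of \<open>y\<close>.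
\<close>
lemma card_value_at_fresh_point:
  assumes C: "C \<subseteq> fibre_funs n d" and X: "X \<subseteq> {1..n}"
    and closed: "\<And>f a b. f \<in> C \<Longrightarrow> a \<in> {1..n} - X \<Longrightarrow> b \<in> {1..n} - X
                   \<Longrightarrow> f \<circ> Transposition.transpose a b \<in> C"
    and avoids: "\<And>f z. f \<in> C \<Longrightarrow> z \<in> X \<Longrightarrow> f z \<noteq> y"
    and x: "x \<in> {1..n} - X" and y: "y \<in> {1..n}"
  shows "card {f \<in> C. f x = y} * (n - card X) = card C * d y"
proof -
  have fin: "finite C" "finite X"
    using C X finite_fibre_funs finite_subset by blast+
  have same_count: "card {f \<in> C. f a = y} = card {f \<in> C. f x = y}" if a: "a \<in> {1..n} - X" for a
  proof -
    let ?\<tau> = "Transposition.transpose a x"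
    have "bij_betw (\<lambda>f. f \<circ> ?\<tau>) {f \<in> C. f a = y} {f \<in> C. f x = y}"
      by (rule bij_betw_byWitness[where f' = "\<lambda>f. f \<circ> ?\<tau>"])
         (use closed[OF _ a x] in \<open>auto simp: comp_assoc\<close>)
    then show ?thesis by (rule bij_betw_same_card)
  qed
  have preimage: "card {a \<in> {1..n} - X. f a = y} = d y" if f: "f \<in> C" for f
  proof -
    have "{a \<in> {1..n} - X. f a = y} = {a \<in> {1..n}. f a = y}"
      using avoids[OF f] by blast
    then show ?thesis
      using f C y by (auto simp: fibre_funs_def)
  qed
  have "(n - card X) * card {f \<in> C. f x = y} = (\<Sum>a\<in>{1..n} - X. card {f \<in> C. f a = y})"
    using X fin by (simp add: same_count card_Diff_subset)
  also have "\<dots> = d y * card C"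
    using fin preimage by (intro sum_multicount) auto
  finally show ?thesis by (simp add: mult.commute)
qed

definition path_funs :: "nat \<Rightarrow> (nat \<Rightarrow> nat) \<Rightarrow> (nat \<Rightarrow> nat) \<Rightarrow> nat \<Rightarrow> (nat \<Rightarrow> nat) set" where
  "path_funs n d p k = {f \<in> fibre_funs n d. \<forall>i<k. f (p i) = p (Suc i)}"

lemma falling_Suc:
  assumes "k < n"
  shows "falling n (Suc k) = falling n k * (real n - real k)"
proof -
  have "fact (n - k) = (real n - real k) * fact (n - Suc k)"
    using assms by (metis Suc_diff_Suc fact_Suc of_nat_diff less_imp_le of_nat_fact)
  then show ?thesis
    using assms by (simp add: falling_def)
qed

lemma card_path_funs_Suc:
  assumes inj: "inj_on p {..Suc k}" and range: "p ` {..Suc k} \<subseteq> {1..n}"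
  shows "card (path_funs n d p (Suc k)) * (n - k) = card (path_funs n d p k) * d (p (Suc k))"
proof -
  let ?X = "p ` {..<k}"
  have card_X: "card ?X = k"
    by (subst card_image) (auto intro: inj_on_subset[OF inj])
  have "p k \<in> {1..n}" "p k \<notin> ?X"
    using range inj by (auto simp: image_subset_iff dest: inj_onD)
  then have fresh: "p k \<in> {1..n} - ?X" by simp
  have "card {f \<in> path_funs n d p k. f (p k) = p (Suc k)} * (n - card ?X)
        = card (path_funs n d p k) * d (p (Suc k))"
  proof (rule card_value_at_fresh_point[OF _ _ _ _ fresh])
    fix f a b assume f: "f \<in> path_funs n d p k" and ab: "a \<in> {1..n} - ?X" "b \<in> {1..n} - ?X"
    then have "Transposition.transpose a b (p i) = p i" if "i < k" for i
      using that by (auto simp: transpose_def)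
    with f ab show "f \<circ> Transposition.transpose a b \<in> path_funs n d p k"
      by (simp add: path_funs_def comp_transpose_in_fibre_funs)
  next
    fix f z assume "f \<in> path_funs n d p k" "z \<in> ?X"
    then obtain i where "i < k" "f z = p (Suc i)"
      by (auto simp: path_funs_def)
    then show "f z \<noteq> p (Suc k)"
      using inj_onD[OF inj, of "Suc i" "Suc k"] by auto
  qed (use range in \<open>auto simp: path_funs_def\<close>)
  moreover have "{f \<in> path_funs n d p k. f (p k) = p (Suc k)} = path_funs n d p (Suc k)"
    by (auto simp: path_funs_def less_Suc_eq)
  ultimately show ?thesis
    using card_X by simp
qed

lemma card_path_funs:
  assumes "inj_on p {..k}" and "p ` {..k} \<subseteq> {1..n}"
  shows "real (card (path_funs n d p k)) * falling n k
         = real (card (fibre_funs n d)) * (\<Prod>i<k. real (d (p (Suc i))))"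
  using assms
proof (induction k)
  case 0
  then show ?case by (simp add: path_funs_def falling_def)
next
  case (Suc k)
  have inj: "inj_on p {..Suc k}" and range: "p ` {..Suc k} \<subseteq> {1..n}"
    using Suc.prems by auto
  have "card {..Suc k} \<le> card {1..n}"
    using card_inj_on_le[OF inj range] by simp
  then have "k < n" by simp
  have recur: "real (card (path_funs n d p (Suc k))) * (real n - real k)
               = real (card (path_funs n d p k)) * real (d (p (Suc k)))"
    using arg_cong[OF card_path_funs_Suc[OF inj range], of real] \<open>k < n\<close> by (simp add: of_nat_diff)
  have IH: "real (card (path_funs n d p k)) * falling n k
            = real (card (fibre_funs n d)) * (\<Prod>i<k. real (d (p (Suc i))))"
    by (rule Suc.IH) (use inj range in \<open>auto simp: image_subset_iff intro: inj_on_subset\<close>)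
  have "real (card (path_funs n d p (Suc k))) * falling n (Suc k)
        = real (card (path_funs n d p (Suc k))) * (real n - real k) * falling n k"
    using \<open>k < n\<close> by (simp add: falling_Suc)
  also have "\<dots> = real (card (path_funs n d p k)) * falling n k * real (d (p (Suc k)))"
    by (simp add: recur)
  also have "\<dots> = real (card (fibre_funs n d)) * (\<Prod>i<Suc k. real (d (p (Suc i))))"
    by (simp add: IH)
  finally show ?case .
qed

lemma funpow_eq_path_iff:
  assumes "p 0 = v"
  shows "(\<forall>i<k. f (p i) = p (Suc i)) \<longleftrightarrow> (\<forall>i\<le>k. (f ^^ i) v = p i)"
  by (induction k) (use assms in \<open>auto simp: less_Suc_eq le_Suc_eq\<close>)

lemma inj_on_atMost_iff:
  fixes g :: "'a::linorder \<Rightarrow> 'b"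
  shows "inj_on g {..m} \<longleftrightarrow> (\<forall>j\<le>m. g j \<notin> g ` {..<j})"
proof
  assume inj: "inj_on g {..m}"
  show "\<forall>j\<le>m. g j \<notin> g ` {..<j}"
  proof (intro allI impI notI)
    fix j assume "j \<le> m" "g j \<in> g ` {..<j}"
    then obtain i where "i < j" "g j = g i" by auto
    moreover have "i \<le> m" using \<open>i < j\<close> \<open>j \<le> m\<close> by (meson less_imp_le order_trans)
    ultimately show False using inj_onD[OF inj, of j i] \<open>j \<le> m\<close> by simp
  qed
next
  assume new: "\<forall>j\<le>m. g j \<notin> g ` {..<j}"
  show "inj_on g {..m}"
  proof (rule inj_onI)
    fix a b assume "a \<in> {..m}" "b \<in> {..m}" "g a = g b"
    then show "a = b"
      using new by (cases a b rule: linorder_cases) (auto, metis lessThan_iff rev_image_eqI)+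
  qed
qed

lemma less_six_length_iff:
  assumes "finite (range (\<lambda>j. (f ^^ j) v))"
  shows "k < six_length f v \<longleftrightarrow> inj_on (\<lambda>j. (f ^^ j) v) {..k}"
proof -
  define g where "g j = (f ^^ j) v" for j
  define P where "P j \<longleftrightarrow> g j \<in> g ` {..<j}" for j
  have "\<exists>j. P j"
  proof (rule ccontr)
    assume "\<nexists>j. P j"
    then have "inj_on g {..m}" for m
      by (simp add: inj_on_atMost_iff P_def)
    then have "inj g"
      by (metis inj_on_def atMost_iff max.cobounded1 max.cobounded2)
    then show False
      using assms finite_imageD[of g UNIV] by (simp add: g_def)
  qed
  then have "k < (LEAST j. P j) \<longleftrightarrow> (\<forall>j\<le>k. \<not> P j)"
    by (metis LeastI_ex not_less_Least le_less_trans not_le)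
  then show ?thesis
    by (simp add: six_length_def inj_on_atMost_iff P_def g_def)
qed

lemma injective_orbit_funs_eq_UN_path_funs:
  assumes v: "v \<in> {1..n}"
  shows "{f \<in> fibre_funs n d. inj_on (\<lambda>j. (f ^^ j) v) {..k}}
         = (\<Union>ys\<in>arrangements ({1..n} - {v}) k. path_funs n d ((!) (v # ys)) k)"
proof (intro equalityI subsetI)
  fix f assume f: "f \<in> {f \<in> fibre_funs n d. inj_on (\<lambda>j. (f ^^ j) v) {..k}}"
  define ys where "ys = map (\<lambda>j. (f ^^ Suc j) v) [0..<k]"
  have orbit: "v # ys = map (\<lambda>j. (f ^^ j) v) [0..<Suc k]"
    by (simp add: ys_def map_upt_Suc del: upt_Suc funpow.simps)
  have "distinct (v # ys)"
    using f by (simp add: orbit distinct_map atLeast0LessThan lessThan_Suc_atMost del: upt_Suc)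
  moreover have "set (v # ys) \<subseteq> {1..n}"
    using funpow_in_fibre_funs[OF _ v] f by (auto simp: orbit)
  moreover have "length ys = k"
    by (simp add: ys_def)
  ultimately have "ys \<in> arrangements ({1..n} - {v}) k"
    by (auto simp: arrangements_def)
  moreover have "f \<in> path_funs n d ((!) (v # ys)) k"
    using f funpow_eq_path_iff[of "(!) (v # ys)" v k f]
    by (simp add: path_funs_def orbit nth_map del: upt_Suc funpow.simps)
  ultimately show "f \<in> (\<Union>ys\<in>arrangements ({1..n} - {v}) k. path_funs n d ((!) (v # ys)) k)"
    by blast
next
  fix f assume "f \<in> (\<Union>ys\<in>arrangements ({1..n} - {v}) k. path_funs n d ((!) (v # ys)) k)"
  then obtain ys where ys: "ys \<in> arrangements ({1..n} - {v}) k"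
    and f: "f \<in> path_funs n d ((!) (v # ys)) k" by blast
  have "inj_on ((!) (v # ys)) {..k}"
    using ys by (intro inj_on_nth) (auto simp: arrangements_def)
  moreover have "(f ^^ i) v = (v # ys) ! i" if "i \<le> k" for i
    using f that funpow_eq_path_iff[of "(!) (v # ys)" v k f] by (simp add: path_funs_def)
  ultimately have "inj_on (\<lambda>j. (f ^^ j) v) {..k}"
    by (metis (no_types, lifting) inj_on_cong atMost_iff)
  with f show "f \<in> {f \<in> fibre_funs n d. inj_on (\<lambda>j. (f ^^ j) v) {..k}}"
    by (simp add: path_funs_def)
qed

lemma path_funs_disjoint:
  assumes "length ys = k" "length zs = k" "ys \<noteq> zs"
  shows "path_funs n d ((!) (v # ys)) k \<inter> path_funs n d ((!) (v # zs)) k = {}"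
proof (rule ccontr)
  assume "path_funs n d ((!) (v # ys)) k \<inter> path_funs n d ((!) (v # zs)) k \<noteq> {}"
  then obtain f where "f \<in> path_funs n d ((!) (v # ys)) k" "f \<in> path_funs n d ((!) (v # zs)) k"
    by blast
  then have "(v # ys) ! i = (v # zs) ! i" if "i \<le> k" for i
    using that funpow_eq_path_iff[of "(!) (v # ys)" v k f] funpow_eq_path_iff[of "(!) (v # zs)" v k f]
    by (simp add: path_funs_def)
  then have "v # ys = v # zs"
    using assms(1,2) by (intro nth_equalityI) auto
  with assms(3) show False by simp
qed

lemma card_six_length_greater:
  assumes v: "v \<in> {1..n}"
  shows "real (card {f \<in> fibre_funs n d. k < six_length f v}) * falling n k
         = real (card (fibre_funs n d)) * fact k * elem_sym ({1..n} - {v}) (\<lambda>i. real (d i)) k"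
proof -
  let ?A = "arrangements ({1..n} - {v}) k"
  let ?path = "\<lambda>ys. path_funs n d ((!) (v # ys)) k"
  have "{f \<in> fibre_funs n d. k < six_length f v} = {f \<in> fibre_funs n d. inj_on (\<lambda>j. (f ^^ j) v) {..k}}"
    using less_six_length_iff funpow_in_fibre_funs[OF _ v]
    by (metis (no_types, lifting) finite_atLeastAtMost finite_subset image_subset_iff)
  also have "\<dots> = (\<Union>ys\<in>?A. ?path ys)"
    by (rule injective_orbit_funs_eq_UN_path_funs[OF v])
  also have "card \<dots> = (\<Sum>ys\<in>?A. card (?path ys))"
  proof (rule card_UN_disjoint)
    show "finite ?A"
      by (simp add: finite_arrangements)
    show "\<forall>ys\<in>?A. finite (?path ys)"
      by (auto simp: path_funs_def intro: finite_subset[OF _ finite_fibre_funs])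
    show "\<forall>ys\<in>?A. \<forall>zs\<in>?A. ys \<noteq> zs \<longrightarrow> ?path ys \<inter> ?path zs = {}"
      using path_funs_disjoint by (simp add: arrangements_def)
  qed
  finally have "card {f \<in> fibre_funs n d. k < six_length f v} = (\<Sum>ys\<in>?A. card (?path ys))" .
  then have "real (card {f \<in> fibre_funs n d. k < six_length f v}) * falling n k
             = (\<Sum>ys\<in>?A. real (card (?path ys)) * falling n k)"
    by (simp add: sum_distrib_right)
  also have "\<dots> = (\<Sum>ys\<in>?A. real (card (fibre_funs n d)) * (\<Prod>i<k. real (d (ys ! i))))"
  proof (intro sum.cong refl)
    fix ys assume "ys \<in> ?A"
    then have len: "length (v # ys) = Suc k" and "distinct (v # ys)" and set: "set (v # ys) \<subseteq> {1..n}"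
      using v by (auto simp: arrangements_def)
    then have "inj_on ((!) (v # ys)) {..k}"
      by (intro inj_on_nth) auto
    moreover have "(!) (v # ys) ` {..k} \<subseteq> {1..n}"
      using len set by (metis atMost_iff image_subsetI le_imp_less_Suc nth_mem subsetD)
    ultimately show "real (card (?path ys)) * falling n k = real (card (fibre_funs n d)) * (\<Prod>i<k. real (d (ys ! i)))"
      by (simp add: card_path_funs)
  qed
  also have "\<dots> = real (card (fibre_funs n d)) * fact k * elem_sym ({1..n} - {v}) (\<lambda>i. real (d i)) k"
    using sum_arrangements_prod[where A = "{1..n} - {v}" and w = "\<lambda>i. real (d i)"]
    by (simp add: sum_distrib_left[symmetric])
  finally show ?thesis .
qed

lemma prob_sl_gt_eq:
  assumes "(\<Sum>i\<in>{1..n}. d i) = n" and "v \<in> {1..n}"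
  shows "prob_sl_gt n d v k = fact k * elem_sym ({1..n} - {v}) (\<lambda>i. real (d i)) k / falling n k"
proof -
  have "card (fibre_funs n d) > 0"
    using fibre_funs_nonempty[OF assms(1)] finite_fibre_funs by (simp add: card_gt_0_iff)
  moreover have "falling n k > 0"
    by (simp add: falling_def)
  ultimately show ?thesis
    using card_six_length_greater[OF assms(2), of d k]
    by (simp add: prob_sl_gt_def field_simps)
qed

lemma g_fun_eq_elem_sym: "g_fun n d k = fact k / falling n k * elem_sym {1..n} (\<lambda>i. real (d i)) k"
  by (simp add: g_fun_def elem_sym_def)

theorem lemma3p3:
  fixes n :: nat and d :: "nat \<Rightarrow> nat" and v k :: nat
  assumes "n \<ge> 3"
    and "(\<Sum>j\<in>{1..n}. d j) = n"
    and "v \<in> {1..n}"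
    and "2 \<le> k" and "k \<le> n - 1"
  shows "prob_sl_gt n d v k =
           g_fun n d k - real k * real (d v) / (real n - real k + 1) * prob_sl_gt n d v (k - 1)"
proof -
  \<comment> \<open>the identity holds for all \<open>1 \<le> k < n\<close>\<close>
  obtain j where k: "k = Suc j" and "j < n"
    using assms(4,5) by (cases k) auto
  define e where "e = elem_sym ({1..n} - {v}) (\<lambda>i. real (d i))"
  have "{1..n} = insert v ({1..n} - {v})"
    using assms(3) by blast
  then have g: "g_fun n d k = fact k / falling n k * (e k + real (d v) * e j)"
    by (metis g_fun_eq_elem_sym elem_sym_insert finite_Diff finite_atLeastAtMost Diff_iff
        insertI1 e_def k)
  have prob: "prob_sl_gt n d v m = fact m * e m / falling n m" for m
    using prob_sl_gt_eq[OF assms(2,3)] by (simp add: e_def)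
  have "falling n k = falling n j * (real n - real k + 1)"
    using falling_Suc[OF \<open>j < n\<close>] k by simp
  then have "real k * real (d v) / (real n - real k + 1) * prob_sl_gt n d v (k - 1)
                   = fact k / falling n k * (real (d v) * e j)"
    by (simp add: prob k ac_simps)
  then show ?thesis
    by (simp add: g prob algebra_simps)
qed

end
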